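(* Let $w_1,w_2\ge2$ be even. The $\mathbb Q$-linear map $(W_{w_1}^{\mathbb Q}\otimes1)\times V_{w_1,w_2}^{\mathbb Q}[I_D]\times(X_1^{w_1}\otimes W_{w_2}^{\mathbb Q})\to E_{w_1,w_2}^{\mathbb Q}$, $(P_H,P_D,P_V)\mapsto P_H-P_D+P_V$, is surjective and its kernel is the line spanned by $\big(1-X_1^{w_1},\,1-X_1^{w_1}X_2^{w_2},\,X_1^{w_1}(1-X_2^{w_2})\big)$. Consequently $\dim E_{w_1,w_2}^{\mathbb Q}=\dim W_{w_1}^{\mathbb Q}+\dim V_{w_1,w_2}^{\mathbb Q}[I_D]+\dim W_{w_2}^{\mathbb Q}-1$.
   Context: $\Gamma=PSL_2(\mathbb Z)$, $S=\pm\begin{pmatrix}0&-1\\1&0\end{pmatrix}$, $U=\pm\begin{pmatrix}0&1\\-1&1\end{pmatrix}$. For even $w$, $V_w^{\mathbb Q}$ is the space of rational polynomials of degree $\le w$ with action $\gamma.P(X)=(-cX+a)^wP\big(\frac{dX-b}{-cX+a}\big)$ for $\gamma=\pm\begin{pmatrix}a&b\\c&d\end{pmatrix}$; $W_w^{\mathbb Q}=\{P\in V_w^{\mathbb Q}:(1+S).P=(1+U+U^2).P=0\}$. $V_{w_1,w_2}^{\mathbb Q}$ is the space of rational polynomials in $X_1,X_2$ with $\deg_{X_j}\le w_j$ with diagonal action $(\gamma_1,\gamma_2).P(X_1,X_2)=(-c_1X_1+a_1)^{w_1}(-c_2X_2+a_2)^{w_2}P\big(\frac{d_1X_1-b_1}{-c_1X_1+a_1},\frac{d_2X_2-b_2}{-c_2X_2+a_2}\big)$.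 $V_{w_1,w_2}^{\mathbb Q}[I_D]=\{P:[(1,1)+(S,S)].P=[(1,1)+(U,U)+(U^2,U^2)].P=0\}$; $W_{w_1}^{\mathbb Q}\otimes1=\{P(X_1):P\in W_{w_1}^{\mathbb Q}\}$; $X_1^{w_1}\otimes W_{w_2}^{\mathbb Q}=\{X_1^{w_1}Q(X_2):Q\in W_{w_2}^{\mathbb Q}\}$; $E_{w_1,w_2}^{\mathbb Q}=(W_{w_1}^{\mathbb Q}\otimes1)+V_{w_1,w_2}^{\mathbb Q}[I_D]+(X_1^{w_1}\otimes W_{w_2}^{\mathbb Q})$. *)

theory Defs
  imports "HOL-Computational_Algebra.Polynomial"
begin

text \<open>Elements of PSL2(Z) are represented by integer matrices (a,b,c,d), meaning
  the class of +-[[a,b],[c,d]]. Since all weights are even, the sign is irrelevant.\<close>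

type_synonym mat2 = "int \<times> int \<times> int \<times> int"

definition mmul :: "mat2 \<Rightarrow> mat2 \<Rightarrow> mat2" where
  "mmul m n = (case m of (a,b,c,d) \<Rightarrow> case n of (a',b',c',d') \<Rightarrow>
     (a*a' + b*c', a*b' + b*d', c*a' + d*c', c*b' + d*d'))"

definition matS :: mat2 where "matS = (0, -1, 1, 0)"
definition matU :: mat2 where "matU = (0, 1, -1, 1)"
definition matU2 :: mat2 where "matU2 = mmul matU matU"

text \<open>The factor (dX - b)^k (-cX + a)^(w-k), as a rational polynomial in one variable.
  For P of degree at most w, gamma.P(X) = (-cX+a)^w P((dX-b)/(-cX+a))
  = sum over k of p_k (dX-b)^k (-cX+a)^(w-k).\<close>
definition mfac :: "nat \<Rightarrow> mat2 \<Rightarrow> nat \<Rightarrow> rat poly" where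
  "mfac w g k = (case g of (a,b,c,d) \<Rightarrow>
     [:- of_int b, of_int d:] ^ k * [:of_int a, - of_int c:] ^ (w - k))"

definition act1 :: "nat \<Rightarrow> mat2 \<Rightarrow> rat poly \<Rightarrow> rat poly" where
  "act1 w g P = (\<Sum>k\<le>w. smult (coeff P k) (mfac w g k))"

definition Vw :: "nat \<Rightarrow> rat poly set" where
  "Vw w = {P. degree P \<le> w}"

definition Ww :: "nat \<Rightarrow> rat poly set" where
  "Ww w = {P \<in> Vw w. P + act1 w matS P = 0 \<and>
                      P + act1 w matU P + act1 w matU2 P = 0}"

text \<open>Two-variable polynomials in X1, X2 are represented as elements of
  rat poly poly: the outer variable is X2, the coefficients are polynomials in X1.\<close>

definition lift2 :: "rat poly \<Rightarrow> rat poly poly" where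
  "lift2 g = map_poly (\<lambda>x. [:x:]) g"

definition qscale :: "rat \<Rightarrow> rat poly poly \<Rightarrow> rat poly poly" where
  "qscale r P = smult [:r:] P"

definition V2 :: "nat \<Rightarrow> nat \<Rightarrow> rat poly poly set" where
  "V2 w1 w2 = {P. degree P \<le> w2 \<and> (\<forall>j. degree (coeff P j) \<le> w1)}"

definition act2 :: "nat \<Rightarrow> nat \<Rightarrow> mat2 \<Rightarrow> mat2 \<Rightarrow> rat poly poly \<Rightarrow> rat poly poly" where
  "act2 w1 w2 g1 g2 P =
     (\<Sum>i\<le>w1. \<Sum>j\<le>w2. qscale (coeff (coeff P j) i) ([:mfac w1 g1 i:] * lift2 (mfac w2 g2 j)))"

definition VID :: "nat \<Rightarrow> nat \<Rightarrow> rat poly poly set" where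
  "VID w1 w2 = {P \<in> V2 w1 w2. P + act2 w1 w2 matS matS P = 0 \<and>
       P + act2 w1 w2 matU matU P + act2 w1 w2 matU2 matU2 P = 0}"

definition WH :: "nat \<Rightarrow> rat poly poly set" where
  "WH w1 = {[:P:] | P. P \<in> Ww w1}"

definition WV :: "nat \<Rightarrow> nat \<Rightarrow> rat poly poly set" where
  "WV w1 w2 = {[:monom 1 w1:] * lift2 Q | Q. Q \<in> Ww w2}"

definition Ew :: "nat \<Rightarrow> nat \<Rightarrow> rat poly poly set" where
  "Ew w1 w2 = {PH + PD + PV | PH PD PV. PH \<in> WH w1 \<and> PD \<in> VID w1 w2 \<and> PV \<in> WV w1 w2}"

end

theory Submission
  imports Defs
begin

(*
  Write P_H = A(X_1) and P_V = X_1^w1 Q(X_2). A triple in the kernel has P_D = P_H + P_V, and since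
  S.A = -A, S.Q = -Q and S.1 = X^w, the relation (1 + (S,S)).P_D = 0 reads
    A(X_1) + X_1^w1 Q(X_2) - A(X_1) X_2^w2 - Q(X_2) = 0.
  Its X_2^0-coefficient gives A = c (1 - X_1^w1) with c = Q(0); what remains is
  (1 - X_1^w1) (c (1 - X_2^w2) - Q(X_2)) = 0, so Q = c (1 - X_2^w2). As 1 - X^w lies in W_w, the
  kernel is exactly the stated line. In particular (W_w1 x 1) meets V[I_D] only in 0, and
  (W_w1 x 1) + V[I_D] meets X_1^w1 x W_w2 in the line through X_1^w1 (1 - X_2^w2); the dimension
  formula is then Grassmann's formula for these two sums inside the finite-dimensional V_{w1,w2}.
*)

section \<open>Sums of subspaces\<close>

context vector_space
begin

lemma independent_Un:
  assumes A: "independent A" and C: "independent C" and AC: "span A \<inter> span C \<subseteq> {0}"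
  shows "independent (A \<union> C)"
proof -
  have not_in_span: "a \<notin> span ((X \<union> Y) - {a})"
    if X: "independent X" "a \<in> X" and XY: "span X \<inter> span Y \<subseteq> {0}" for X Y a
  proof
    assume "a \<in> span ((X \<union> Y) - {a})"
    moreover have "a \<notin> Y"
      using X XY span_base dependent_zero by blast
    ultimately have "a \<in> span ((X - {a}) \<union> Y)"
      by (simp add: Un_Diff)
    then obtain x y where xy: "a = x + y" "x \<in> span (X - {a})" "y \<in> span Y"
      using span_Un by blast
    have "x \<in> span X"
      using xy(2) span_mono[of "X - {a}" X] by blast
    then have "y \<in> span X"
      using span_diff[OF span_base[OF X(2)]] xy(1) by (metis add_diff_cancel_left')
    then have "y = 0"
      using XY xy(3) by blast
    then show False
      using X xy dependent_def by auto
  qed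
  show ?thesis
    unfolding dependent_def
    using not_in_span[OF A _ AC] not_in_span[OF C, of _ A] AC by (auto simp: Un_commute)
qed

lemma dim_sums_direct:
  assumes "subspace S" "subspace T" "S \<inter> T \<subseteq> {0}"
    and "finite F" "S \<subseteq> span F" "T \<subseteq> span F"
  shows "dim {x + y |x y. x \<in> S \<and> y \<in> T} = dim S + dim T"
proof -
  obtain BS where BS: "BS \<subseteq> S" "independent BS" "S \<subseteq> span BS" "card BS = dim S"
    using basis_exists .
  obtain BT where BT: "BT \<subseteq> T" "independent BT" "T \<subseteq> span BT" "card BT = dim T"
    using basis_exists .
  have fin: "finite BS" "finite BT"
    using BS BT assms independent_span_bound by (meson order_trans)+
  have span_eq: "span BS = S" "span BT = T"
    using BS BT assms span_subspace by auto
  have "BS \<inter> BT = {}"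
    using BS(1,2) BT(1) assms(3) dependent_zero by blast
  moreover have "independent (BS \<union> BT)"
    using independent_Un BS(2) BT(2) assms(3) span_eq by simp
  moreover have "{x + y |x y. x \<in> S \<and> y \<in> T} = span (BS \<union> BT)"
    by (simp add: span_Un span_eq)
  ultimately show ?thesis
    using BS(4) BT(4) fin by (simp add: dim_eq_card_independent card_Un_disjoint)
qed

lemma line_complement_exists:
  assumes S: "subspace S" "finite F" "S \<subseteq> span F" and a: "a \<in> S" "a \<noteq> 0"
  obtains C where "subspace C" "C \<subseteq> S" "S = {x + y |x y. x \<in> span {a} \<and> y \<in> C}"
    "span {a} \<inter> C \<subseteq> {0}" "dim C + 1 = dim S"
proof -
  obtain B where B: "{a} \<subseteq> B" "B \<subseteq> S" "independent B" "S \<subseteq> span B"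
    using maximal_independent_subset_extend[of "{a}" S] a by auto
  define C where "C = span (B - {a})"
  have "subspace C"
    unfolding C_def by (rule subspace_span)
  moreover have "C \<subseteq> S"
    unfolding C_def using B(2) S(1) by (meson Diff_subset order_trans span_minimal)
  moreover have sum: "S = {x + y |x y. x \<in> span {a} \<and> y \<in> C}"
  proof -
    have "span B = S"
      using B S span_subspace by blast
    moreover have "B = {a} \<union> (B - {a})"
      using B by blast
    ultimately show ?thesis
      unfolding C_def by (metis span_Un)
  qed
  moreover have a_C: "span {a} \<inter> C \<subseteq> {0}"
  proof
    fix x assume "x \<in> span {a} \<inter> C"
    then obtain k where k: "x = k *s a" "k *s a \<in> span (B - {a})"
      by (auto simp: span_singleton C_def)
    have "k = 0"
    proof (rule ccontr)
      assume "k \<noteq> 0"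
      then have "a \<in> span (B - {a})"
        using span_scale[OF k(2), of "inverse k"] by simp
      then show False
        using B dependent_def by blast
    qed
    then show "x \<in> {0}"
      using k by simp
  qed
  moreover have "dim C + 1 = dim S"
  proof -
    have "span {a} \<subseteq> S"
      using a(1) S(1) span_minimal[of "{a}" S] by simp
    then have "span {a} \<subseteq> span F" "C \<subseteq> span F"
      using \<open>C \<subseteq> S\<close> S(3) by auto
    then have "dim S = dim (span {a}) + dim C"
      using dim_sums_direct[OF subspace_span \<open>subspace C\<close> a_C S(2)] sum by simp
    then show ?thesis
      using a by (simp add: dim_eq_card_independent)
  qed
  ultimately show ?thesis
    using that by blast
qed

lemma dim_sums_line_Int:
  assumes S: "subspace S" and T: "subspace T" and ST: "S \<inter> T = span {a}" "a \<noteq> 0"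
    and F: "finite F" "S \<subseteq> span F" "T \<subseteq> span F"
  shows "dim {x + y |x y. x \<in> S \<and> y \<in> T} + 1 = dim S + dim T"
proof -
  have "a \<in> T"
    using ST span_base by blast
  then obtain C where C: "subspace C" "C \<subseteq> T" "T = {x + y |x y. x \<in> span {a} \<and> y \<in> C}"
    "span {a} \<inter> C \<subseteq> {0}" "dim C + 1 = dim T"
    using line_complement_exists[OF T F(1,3) _ ST(2)] by blast
  have "{x + y |x y. x \<in> S \<and> y \<in> T} = {x + y |x y. x \<in> S \<and> y \<in> C}"
  proof (intro equalityI subsetI)
    fix z assume "z \<in> {x + y |x y. x \<in> S \<and> y \<in> T}"
    then obtain x k c where "z = x + (k + c)" "x \<in> S" "k \<in> span {a}" "c \<in> C"
      using C(3) by blast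
    moreover have "x + k \<in> S"
      using S ST \<open>x \<in> S\<close> \<open>k \<in> span {a}\<close> subspace_add by blast
    ultimately show "z \<in> {x + y |x y. x \<in> S \<and> y \<in> C}"
      by (metis (mono_tags, lifting) add.assoc mem_Collect_eq)
  qed (use C(2) in blast)
  moreover have "S \<inter> C \<subseteq> {0}"
    using C(2,4) ST by blast
  ultimately have "dim {x + y |x y. x \<in> S \<and> y \<in> T} = dim S + dim C"
    using dim_sums_direct[OF S C(1) _ F(1,2)] C(2) F(3) by auto
  then show ?thesis
    using C(5) by simp
qed

end

lemma (in vector_space_pair) dim_image_inj:
  assumes f: "module_hom s1 s2 f" and "inj f"
  shows "vs2.dim (f ` S) = vs1.dim S"
proof -
  obtain B where B: "B \<subseteq> S" "vs1.independent B" "S \<subseteq> vs1.span B" "card B = vs1.dim S"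
    using vs1.basis_exists .
  have "f ` S \<subseteq> vs2.span (f ` B)"
    using B(3) module_hom.span_image[OF f] by blast
  moreover have "vs2.independent (f ` B)"
    using module_hom.independent_inj_image[OF f B(2) \<open>inj f\<close>] .
  ultimately have "vs2.dim (f ` S) = card (f ` B)"
    by (metis B(1) image_mono vs2.basis_card_eq_dim)
  also have "\<dots> = vs1.dim S"
    using B(4) \<open>inj f\<close> by (simp add: card_image inj_on_subset)
  finally show ?thesis .
qed

section \<open>Polynomials in one and two variables\<close>

interpretation P: vector_space "smult :: rat \<Rightarrow> rat poly \<Rightarrow> rat poly"
  by unfold_locales (auto simp: smult_add_right smult_add_left)

interpretation Q: vector_space qscale
  by unfold_locales
    (simp_all add: qscale_def smult_add_right mult.commute pCons_one flip: smult_add_left)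

interpretation PQ: vector_space_pair "smult :: rat \<Rightarrow> rat poly \<Rightarrow> rat poly" qscale ..

lemma coeff_lift2 [simp]: "coeff (lift2 g) n = [:coeff g n:]"
  by (simp add: lift2_def coeff_map_poly)

lemma degree_lift2 [simp]: "degree (lift2 g) = degree g"
  by (simp add: lift2_def degree_map_poly)

lemma lift2_0 [simp]: "lift2 0 = 0"
  by (rule poly_eqI) simp

lemma lift2_1 [simp]: "lift2 1 = 1"
  by (rule poly_eqI) (simp add: coeff_1)

lemma lift2_add [simp]: "lift2 (p + q) = lift2 p + lift2 q"
  by (rule poly_eqI) simp

lemma lift2_diff [simp]: "lift2 (p - q) = lift2 p - lift2 q"
  by (rule poly_eqI) simp

lemma lift2_minus [simp]: "lift2 (- p) = - lift2 p"
  by (rule poly_eqI) simp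

lemma lift2_smult [simp]: "lift2 (smult c p) = smult [:c:] (lift2 p)"
  by (rule poly_eqI) simp

lemma lift2_monom [simp]: "lift2 (monom c n) = monom [:c:] n"
  by (rule poly_eqI) (simp add: coeff_monom)

lemma lift2_inject [simp]: "lift2 p = lift2 q \<longleftrightarrow> p = q"
  by (metis coeff_lift2 pCons_eq_iff poly_eqI)

lemma lift2_eq_0_iff [simp]: "lift2 p = 0 \<longleftrightarrow> p = 0"
  using lift2_inject[of p 0] by simp

lemma lift2_sum: "lift2 (sum f A) = (\<Sum>x\<in>A. lift2 (f x))"
  by (induct A rule: infinite_finite_induct) auto

lemma pCons_sum: "[:sum f A:] = (\<Sum>x\<in>A. [:f x:])"
  by (rule poly_eqI) (simp add: coeff_sum coeff_pCons split: nat.split)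

definition tensor :: "rat poly \<Rightarrow> rat poly \<Rightarrow> rat poly poly" where
  "tensor A B = [:A:] * lift2 B"

lemma tensor_eq_smult: "tensor A B = smult A (lift2 B)"
  by (simp add: tensor_def)

lemma coeff_tensor: "coeff (tensor A B) j = smult (coeff B j) A"
  by (simp add: tensor_eq_smult mult.commute[of A])

lemma tensor_eq_0_iff [simp]: "tensor A B = 0 \<longleftrightarrow> A = 0 \<or> B = 0"
  by (simp add: tensor_eq_smult)

lemma tensor_add_left: "tensor (A + A') B = tensor A B + tensor A' B"
  and tensor_add_right: "tensor A (B + B') = tensor A B + tensor A B'"
  and tensor_diff_left: "tensor (A - A') B = tensor A B - tensor A' B"
  and tensor_diff_right: "tensor A (B - B') = tensor A B - tensor A B'"
  and tensor_minus_left: "tensor (- A) B = - tensor A B"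
  and tensor_minus_right: "tensor A (- B) = - tensor A B"
  and tensor_smult_left: "tensor (smult c A) B = qscale c (tensor A B)"
  and tensor_smult_right: "tensor A (smult c B) = qscale c (tensor A B)"
  by (simp_all add: tensor_eq_smult qscale_def smult_add_left smult_add_right smult_diff_left
      smult_diff_right mult.commute)

lemmas tensor_bilinear = tensor_add_left tensor_add_right tensor_diff_left tensor_diff_right
  tensor_minus_left tensor_minus_right tensor_smult_left tensor_smult_right

lemma tensor_1_1: "tensor 1 1 = 1"
  by (simp add: tensor_def pCons_one)

lemma tensor_monom_monom: "tensor (monom 1 i) (monom 1 j) = monom (monom 1 i) j"
  by (simp add: tensor_eq_smult smult_monom)

lemma module_hom_pCons: "module_hom smult qscale (\<lambda>A :: rat poly. [:A:])"
  unfolding module_hom_iff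
  by (auto simp: module_iff_vector_space qscale_def P.vector_space_axioms Q.vector_space_axioms)

lemma module_hom_tensor: "module_hom smult qscale (tensor M)"
  unfolding module_hom_iff
  by (simp add: module_iff_vector_space P.vector_space_axioms Q.vector_space_axioms tensor_bilinear)

lemma inj_tensor: "M \<noteq> 0 \<Longrightarrow> inj (tensor M)"
  by (rule injI) (metis eq_iff_diff_eq_0 tensor_diff_right tensor_eq_0_iff)

lemma module_hom_act1: "module_hom smult smult (act1 w g)"
  unfolding module_hom_iff
  by (auto simp: module_iff_vector_space P.vector_space_axioms act1_def smult_add_left
      sum.distrib smult_smult P.scale_sum_right)

lemma module_hom_act2: "module_hom qscale qscale (act2 w1 w2 g1 g2)"
  unfolding module_hom_iff
  by (auto simp: module_iff_vector_space Q.vector_space_axioms act2_def qscale_def smult_add_left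
      sum.distrib Q.scale_sum_right[unfolded qscale_def] smult_smult mult.commute)

lemma act2_tensor:
  "act2 w1 w2 g1 g2 (tensor A B) = tensor (act1 w1 g1 A) (act1 w2 g2 B)"
proof -
  have "tensor (act1 w1 g1 A) (act1 w2 g2 B)
     = (\<Sum>i\<le>w1. [:smult (coeff A i) (mfac w1 g1 i):]) * (\<Sum>j\<le>w2. lift2 (smult (coeff B j) (mfac w2 g2 j)))"
    by (simp only: tensor_def act1_def lift2_sum pCons_sum)
  also have "\<dots> = act2 w1 w2 g1 g2 (tensor A B)"
    unfolding act2_def qscale_def sum_product
    by (intro sum.cong refl)
      (simp add: tensor_eq_smult coeff_tensor mult_smult_left mult_smult_right smult_smult mult.commute)
  finally show ?thesis ..
qed

section \<open>The action on \<open>1\<close> and \<open>X^w\<close>\<close>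

lemma act1_1: "act1 w g 1 = mfac w g 0"
proof -
  have "act1 w g 1 = (\<Sum>k\<le>w. if k = 0 then mfac w g k else 0)"
    unfolding act1_def by (intro sum.cong) (auto simp: coeff_1)
  then show ?thesis
    by simp
qed

lemma act1_monom: "act1 w g (monom 1 w) = mfac w g w"
proof -
  have "act1 w g (monom 1 w) = (\<Sum>k\<le>w. if k = w then mfac w g k else 0)"
    unfolding act1_def by (intro sum.cong) (auto simp: coeff_monom)
  then show ?thesis
    by simp
qed

lemma matU2_eq: "matU2 = (-1, 1, -1, 0)"
  by (simp add: matU2_def matU_def mmul_def)

lemma X_power: "[:0, 1:] ^ w = (monom 1 w :: rat poly)"
  by (simp add: monom_altdef)

lemma act1_matS:
  "even w \<Longrightarrow> act1 w matS 1 = monom 1 w" "act1 w matS (monom 1 w) = 1"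
proof -
  assume "even w"
  have "[:0, -1:] = - [:0, 1 :: rat:]"
    by simp
  then have "[:0, -1:] ^ w = [:0, 1 :: rat:] ^ w"
    using \<open>even w\<close> by (simp only: power_minus_even)
  then show "act1 w matS 1 = monom 1 w"
    by (simp add: act1_1 mfac_def matS_def flip: X_power)
next
  show "act1 w matS (monom 1 w) = 1"
    by (simp add: act1_monom mfac_def matS_def pCons_one)
qed

lemma act1_matU:
  "act1 w matU 1 = monom 1 w" "act1 w matU (monom 1 w) = [:-1, 1:] ^ w"
  by (simp add: act1_1 mfac_def matU_def flip: X_power) (simp add: act1_monom mfac_def matU_def)

lemma act1_matU2:
  "act1 w matU2 1 = [:-1, 1:] ^ w" "even w \<Longrightarrow> act1 w matU2 (monom 1 w) = 1"
proof -
  show "act1 w matU2 1 = [:-1, 1:] ^ w"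
    by (simp add: act1_1 mfac_def matU2_eq)
  assume "even w"
  have "[:-1:] = (-1 :: rat poly)"
    by (metis minus_pCons minus_zero pCons_one)
  then have "[:-1:] ^ w = (1 :: rat poly)"
    using \<open>even w\<close> by (simp only: neg_one_even_power)
  then show "act1 w matU2 (monom 1 w) = 1"
    by (simp add: act1_monom mfac_def matU2_eq)
qed

lemmas act1_special = act1_matS act1_matU act1_matU2

lemma degree_one_minus_monom: "degree (1 - monom 1 w :: rat poly) \<le> w"
  by (metis degree_1 degree_diff_le degree_monom_le le0)

lemma one_minus_monom_nonzero:
  assumes "w \<ge> 1"
  shows "1 - monom 1 w \<noteq> (0 :: rat poly)"
proof
  assume "1 - monom 1 w = (0 :: rat poly)"
  then have "coeff (1 - monom 1 w :: rat poly) 0 = 0"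
    by simp
  then show False
    using assms by (simp add: coeff_monom)
qed

text \<open>\<open>S\<close> swaps \<open>1\<close> and \<open>X^w\<close>, and \<open>U\<close> permutes \<open>1, X^w, (X - 1)^w\<close> cyclically.\<close>

lemma one_minus_monom_in_Ww:
  assumes "even w"
  shows "1 - monom 1 w \<in> Ww w"
  using assms degree_one_minus_monom module_hom.diff[OF module_hom_act1]
  by (simp add: Ww_def Vw_def act1_special)

lemma subspace_Ww: "P.subspace (Ww w)"
proof (unfold P.subspace_def, intro conjI ballI allI)
  show "0 \<in> Ww w"
    by (simp add: Ww_def Vw_def module_hom.zero[OF module_hom_act1])
  fix P Q assume "P \<in> Ww w" "Q \<in> Ww w"
  then show "P + Q \<in> Ww w"
    unfolding Ww_def Vw_def by (auto simp: module_hom.add[OF module_hom_act1] algebra_simps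
        intro: order_trans[OF degree_add_le])
next
  fix c P assume "P \<in> Ww w"
  then show "smult c P \<in> Ww w"
    unfolding Ww_def Vw_def by (simp add: module_hom.scale[OF module_hom_act1] flip: smult_add_right)
qed

lemma subspace_V2: "Q.subspace (V2 w1 w2)"
  unfolding Q.subspace_def V2_def qscale_def
  by (auto simp: degree_add_le intro: order_trans[OF degree_smult_le])

lemma subspace_VID: "Q.subspace (VID w1 w2)"
proof (unfold Q.subspace_def, intro conjI ballI allI)
  show "0 \<in> VID w1 w2"
    using Q.subspace_0[OF subspace_V2] by (simp add: VID_def module_hom.zero[OF module_hom_act2])
  fix P Q assume "P \<in> VID w1 w2" "Q \<in> VID w1 w2"
  then show "P + Q \<in> VID w1 w2"
    using Q.subspace_add[OF subspace_V2] unfolding VID_def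
    by (auto simp: module_hom.add[OF module_hom_act2] algebra_simps)
next
  fix c P assume "P \<in> VID w1 w2"
  then show "qscale c P \<in> VID w1 w2"
    using Q.subspace_scale[OF subspace_V2] unfolding VID_def
    by (simp add: module_hom.scale[OF module_hom_act2] flip: Q.scale_right_distrib)
qed

lemma tensor_in_V2:
  assumes "degree A \<le> w1" "degree B \<le> w2"
  shows "tensor A B \<in> V2 w1 w2"
  using assms degree_smult_le[of A "lift2 B"] degree_smult_le[of _ A]
  by (auto simp: V2_def coeff_tensor tensor_eq_smult intro: order_trans)

lemma one_minus_monom_monom_eq_tensor:
  "1 - monom (monom 1 w1) w2 = tensor 1 1 - tensor (monom 1 w1) (monom 1 w2)"
  by (simp add: tensor_monom_monom tensor_1_1)

lemma one_minus_monom_monom_in_VID: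
  assumes "even w1" "even w2"
  shows "1 - monom (monom 1 w1) w2 \<in> VID w1 w2"
proof -
  have "1 - monom (monom 1 w1) w2 \<in> V2 w1 w2"
    unfolding one_minus_monom_monom_eq_tensor
    by (intro Q.subspace_diff[OF subspace_V2] tensor_in_V2) (simp_all add: degree_monom_le)
  then show ?thesis
    using assms module_hom.diff[OF module_hom_act2]
    by (simp add: VID_def one_minus_monom_monom_eq_tensor act2_tensor act1_special)
qed

lemma WH_eq_image: "WH w1 = (\<lambda>A. [:A:]) ` Ww w1"
  by (auto simp: WH_def)

lemma WV_eq_image: "WV w1 w2 = tensor (monom 1 w1) ` Ww w2"
  by (auto simp: WV_def tensor_def)

lemma subspace_WH: "Q.subspace (WH w1)"
  unfolding WH_eq_image by (rule module_hom.subspace_image[OF module_hom_pCons subspace_Ww])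

lemma subspace_WV: "Q.subspace (WV w1 w2)"
  unfolding WV_eq_image by (rule module_hom.subspace_image[OF module_hom_tensor subspace_Ww])

lemma VID_subset_V2: "VID w1 w2 \<subseteq> V2 w1 w2"
  by (auto simp: VID_def)

lemma WH_subset_V2: "WH w1 \<subseteq> V2 w1 w2"
  using tensor_in_V2[of _ w1 1 w2] by (auto simp: WH_def Ww_def Vw_def tensor_def pCons_one)

lemma WV_subset_V2: "WV w1 w2 \<subseteq> V2 w1 w2"
  using tensor_in_V2[of "monom 1 w1" w1 _ w2]
  by (auto simp: WV_eq_image Ww_def Vw_def degree_monom_le)

lemma V2_subset_span_monoms:
  "V2 w1 w2 \<subseteq> Q.span ((\<lambda>(i, j). monom (monom 1 i) j) ` ({..w1} \<times> {..w2}))"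
  (is "_ \<subseteq> Q.span ?M")
proof
  fix P assume "P \<in> V2 w1 w2"
  then have d: "degree P \<le> w2" "\<And>j. degree (coeff P j) \<le> w1" by (auto simp: V2_def)
  have "(\<Sum>j\<le>degree P. monom (coeff P j) j) \<in> Q.span ?M"
  proof (rule Q.span_sum)
    fix j assume j: "j \<in> {..degree P}"
    have "monom (\<Sum>i\<le>degree (coeff P j). monom (coeff (coeff P j) i) i) j \<in> Q.span ?M"
      unfolding monom_sum
    proof (rule Q.span_sum)
      fix i assume i: "i \<in> {..degree (coeff P j)}"
      then have "monom (monom 1 i) j \<in> ?M" using d j
        by (intro image_eqI[where x="(i,j)"]) (auto intro: order_trans)
      then have "qscale (coeff (coeff P j) i) (monom (monom 1 i) j) \<in> Q.span ?M"
        by (intro Q.span_scale Q.span_base)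
      then show "monom (monom (coeff (coeff P j) i) i) j \<in> Q.span ?M"
        by (simp add: qscale_def smult_monom)
    qed
    then show "monom (coeff P j) j \<in> Q.span ?M" by (simp add: poly_as_sum_of_monoms)
  qed
  then show "P \<in> Q.span ?M" by (simp add: poly_as_sum_of_monoms)
qed

section \<open>The kernel and the dimension count\<close>

lemma VID_tensor_sum_S_relation:
  assumes ev: "even w2" and A: "A \<in> Ww w1" and Q: "Q \<in> Ww w2"
    and D: "tensor A 1 + tensor (monom 1 w1) Q \<in> VID w1 w2"
  shows "tensor A 1 + tensor (monom 1 w1) Q - tensor A (monom 1 w2) - tensor 1 Q = 0"
proof -
  have "act1 w1 matS A = - A" "act1 w2 matS Q = - Q"
    using A Q by (simp_all add: Ww_def eq_neg_iff_add_eq_0 add.commute)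
  then have "act2 w1 w2 matS matS (tensor A 1 + tensor (monom 1 w1) Q)
      = - tensor A (monom 1 w2) - tensor 1 Q"
    using ev module_hom.add[OF module_hom_act2]
    by (simp add: act2_tensor act1_special tensor_bilinear flip: tensor_diff_left tensor_diff_right)
  moreover have "tensor A 1 + tensor (monom 1 w1) Q
      + act2 w1 w2 matS matS (tensor A 1 + tensor (monom 1 w1) Q) = 0"
    using D unfolding VID_def by blast
  ultimately show ?thesis
    by (simp add: algebra_simps)
qed

lemma VID_tensor_sum_proportional:
  assumes ev: "even w2" and w: "w1 \<ge> 1" "w2 \<ge> 1"
    and A: "A \<in> Ww w1" and Q: "Q \<in> Ww w2" and D: "tensor A 1 + tensor (monom 1 w1) Q \<in> VID w1 w2"
  shows "A = smult (coeff Q 0) (1 - monom 1 w1) \<and> Q = smult (coeff Q 0) (1 - monom 1 w2)"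
proof -
  define c where "c = coeff Q 0"
  define X1 :: "rat poly" where "X1 = monom 1 w1"
  define X2 :: "rat poly" where "X2 = monom 1 w2"
  have E: "tensor A 1 + tensor X1 Q - tensor A X2 - tensor 1 Q = 0"
    unfolding X1_def X2_def by (rule VID_tensor_sum_S_relation[OF ev A Q D])
  then have "coeff (tensor A 1 + tensor X1 Q - tensor A X2 - tensor 1 Q) 0 = 0"
    by simp
  then have A_eq: "A = smult c (1 - X1)"
    using w by (simp add: coeff_tensor coeff_1 X2_def c_def algebra_simps)
  have A_part: "tensor A 1 - tensor A X2 = qscale c (tensor (1 - X1) (1 - X2))"
    unfolding A_eq tensor_smult_left by (simp add: tensor_diff_right Q.scale_right_diff_distrib)
  have Q_part: "tensor X1 Q - tensor 1 Q = - tensor (1 - X1) Q"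
    by (simp add: tensor_diff_left)
  have "tensor (1 - X1) (smult c (1 - X2) - Q) = qscale c (tensor (1 - X1) (1 - X2)) - tensor (1 - X1) Q"
    by (simp only: tensor_diff_right tensor_smult_right)
  also have "\<dots> = (tensor A 1 - tensor A X2) + (tensor X1 Q - tensor 1 Q)"
    unfolding A_part Q_part by simp
  also have "\<dots> = 0"
    using E by (simp add: algebra_simps)
  finally have "tensor (1 - X1) (smult c (1 - X2) - Q) = 0" .
  moreover have "1 - X1 \<noteq> 0"
    using one_minus_monom_nonzero[OF w(1)] unfolding X1_def .
  ultimately have "Q = smult c (1 - X2)"
    by simp
  with A_eq show ?thesis
    unfolding c_def X1_def X2_def by simp
qed

abbreviation kernel_H :: "nat \<Rightarrow> rat poly poly" where
  "kernel_H w1 \<equiv> [:1 - monom 1 w1:]"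

abbreviation kernel_D :: "nat \<Rightarrow> nat \<Rightarrow> rat poly poly" where
  "kernel_D w1 w2 \<equiv> 1 - monom (monom 1 w1) w2"

abbreviation kernel_V :: "nat \<Rightarrow> nat \<Rightarrow> rat poly poly" where
  "kernel_V w1 w2 \<equiv> [:monom 1 w1:] * (1 - monom 1 w2)"

lemma kernel_H_eq_tensor: "kernel_H w1 = tensor (1 - monom 1 w1) 1"
  by (simp add: tensor_def pCons_one)

lemma kernel_V_eq_tensor: "kernel_V w1 w2 = tensor (monom 1 w1) (1 - monom 1 w2)"
  by (simp add: tensor_def pCons_one)

lemma kernel_V_nonzero: "w2 \<ge> 1 \<Longrightarrow> kernel_V w1 w2 \<noteq> 0"
  unfolding kernel_V_eq_tensor using one_minus_monom_nonzero[of w2] by simp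

lemma kernel_gens_relation: "kernel_H w1 - kernel_D w1 w2 + kernel_V w1 w2 = 0"
  unfolding kernel_H_eq_tensor kernel_V_eq_tensor one_minus_monom_monom_eq_tensor
  by (simp add: tensor_bilinear)

lemma kernel_gens_mem:
  assumes "even w1" "even w2"
  shows "kernel_H w1 \<in> WH w1" "kernel_D w1 w2 \<in> VID w1 w2" "kernel_V w1 w2 \<in> WV w1 w2"
proof -
  show "kernel_H w1 \<in> WH w1"
    using one_minus_monom_in_Ww assms by (auto simp: WH_def)
  show "kernel_D w1 w2 \<in> VID w1 w2"
    using one_minus_monom_monom_in_VID assms by blast
  show "kernel_V w1 w2 \<in> WV w1 w2"
    unfolding kernel_V_eq_tensor WV_eq_image using one_minus_monom_in_Ww assms by blast
qed

lemma kernel_is_line: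
  assumes ev: "even w2" and w: "w1 \<ge> 1" "w2 \<ge> 1"
    and H: "PH \<in> WH w1" and D: "PD \<in> VID w1 w2" and V: "PV \<in> WV w1 w2"
    and sum: "PH - PD + PV = 0"
  obtains r where "PH = qscale r (kernel_H w1)" "PD = qscale r (kernel_D w1 w2)"
    "PV = qscale r (kernel_V w1 w2)"
proof -
  obtain A Q where A: "A \<in> Ww w1" "PH = tensor A 1" and Q: "Q \<in> Ww w2" "PV = tensor (monom 1 w1) Q"
    using H V by (auto simp: WH_def WV_def tensor_def pCons_one)
  have PD: "PD = PH + PV"
    using sum by (simp add: algebra_simps)
  then have "tensor A 1 + tensor (monom 1 w1) Q \<in> VID w1 w2"
    using A(2) Q(2) D by simp
  then obtain c where "A = smult c (1 - monom 1 w1)" "Q = smult c (1 - monom 1 w2)"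
    using VID_tensor_sum_proportional[OF ev w A(1) Q(1)] by blast
  then have H: "PH = qscale c (kernel_H w1)" and V: "PV = qscale c (kernel_V w1 w2)"
    unfolding kernel_H_eq_tensor kernel_V_eq_tensor using A(2) Q(2)
    by (simp_all only: tensor_smult_left tensor_smult_right)
  moreover have "kernel_D w1 w2 = kernel_H w1 + kernel_V w1 w2"
    using kernel_gens_relation[of w1 w2] by (simp add: algebra_simps)
  then have "PD = qscale c (kernel_D w1 w2)"
    using PD H V by (simp only: Q.scale_right_distrib)
  ultimately show ?thesis
    using that V by blast
qed

lemma kernel_eq_line:
  assumes "even w1" "even w2" "w1 \<ge> 1" "w2 \<ge> 1"
  shows "{(PH, PD, PV). PH \<in> WH w1 \<and> PD \<in> VID w1 w2 \<and> PV \<in> WV w1 w2 \<and> PH - PD + PV = 0}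
    = {(qscale r (kernel_H w1), qscale r (kernel_D w1 w2), qscale r (kernel_V w1 w2)) | r. True}"
proof (intro equalityI subsetI)
  fix x assume "x \<in> {(PH, PD, PV). PH \<in> WH w1 \<and> PD \<in> VID w1 w2 \<and> PV \<in> WV w1 w2 \<and> PH - PD + PV = 0}"
  then show "x \<in> {(qscale r (kernel_H w1), qscale r (kernel_D w1 w2), qscale r (kernel_V w1 w2)) | r. True}"
    using kernel_is_line[OF assms(2-4)] by auto metis
next
  fix x assume "x \<in> {(qscale r (kernel_H w1), qscale r (kernel_D w1 w2), qscale r (kernel_V w1 w2)) | r. True}"
  then obtain r where "x = (qscale r (kernel_H w1), qscale r (kernel_D w1 w2), qscale r (kernel_V w1 w2))"
    by blast
  moreover note kernel_gens_mem[OF assms(1,2)] kernel_gens_relation[of w1 w2]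
  ultimately show "x \<in> {(PH, PD, PV). PH \<in> WH w1 \<and> PD \<in> VID w1 w2 \<and> PV \<in> WV w1 w2 \<and> PH - PD + PV = 0}"
    using Q.subspace_scale[OF subspace_WH] Q.subspace_scale[OF subspace_VID] Q.subspace_scale[OF subspace_WV]
    by (simp flip: Q.scale_right_diff_distrib Q.scale_right_distrib)
qed

lemma image_eq_Ew: "(\<lambda>(PH, PD, PV). PH - PD + PV) ` (WH w1 \<times> VID w1 w2 \<times> WV w1 w2) = Ew w1 w2"
proof (intro equalityI subsetI)
  fix z assume "z \<in> (\<lambda>(PH, PD, PV). PH - PD + PV) ` (WH w1 \<times> VID w1 w2 \<times> WV w1 w2)"
  then obtain PH PD PV where "z = PH + (- PD) + PV" "PH \<in> WH w1" "- PD \<in> VID w1 w2" "PV \<in> WV w1 w2"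
    using Q.subspace_neg[OF subspace_VID] by auto
  then show "z \<in> Ew w1 w2"
    unfolding Ew_def by blast
next
  fix z assume "z \<in> Ew w1 w2"
  then obtain PH PD PV where "z = PH - (- PD) + PV" "PH \<in> WH w1" "- PD \<in> VID w1 w2" "PV \<in> WV w1 w2"
    using Q.subspace_neg[OF subspace_VID] unfolding Ew_def by fastforce
  then show "z \<in> (\<lambda>(PH, PD, PV). PH - PD + PV) ` (WH w1 \<times> VID w1 w2 \<times> WV w1 w2)"
    by force
qed

lemma WH_Int_VID:
  assumes "even w2" "w1 \<ge> 1" "w2 \<ge> 1"
  shows "WH w1 \<inter> VID w1 w2 \<subseteq> {0}"
proof
  fix x assume x: "x \<in> WH w1 \<inter> VID w1 w2"
  have "x - x + 0 = 0"
    by simp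
  then obtain r where "x = qscale r (kernel_H w1)" "0 = qscale r (kernel_V w1 w2)"
    using kernel_is_line[OF assms _ _ Q.subspace_0[OF subspace_WV]] x by blast
  moreover have "kernel_V w1 w2 \<noteq> 0"
    using kernel_V_nonzero assms(3) .
  ultimately show "x \<in> {0}"
    by (simp add: qscale_def)
qed

lemma sums_WH_VID_Int_WV:
  assumes "even w1" "even w2" "w1 \<ge> 1" "w2 \<ge> 1"
  shows "{x + y |x y. x \<in> WH w1 \<and> y \<in> VID w1 w2} \<inter> WV w1 w2 = Q.span {kernel_V w1 w2}"
proof (rule equalityI[OF subsetI])
  fix z assume "z \<in> {x + y |x y. x \<in> WH w1 \<and> y \<in> VID w1 w2} \<inter> WV w1 w2"
  then obtain x y where xy: "z = x + y" "x \<in> WH w1" "y \<in> VID w1 w2" "z \<in> WV w1 w2"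
    by blast
  moreover have "x - (- y) + (- z) = 0"
    using xy(1) by simp
  ultimately obtain r where "- z = qscale r (kernel_V w1 w2)"
    using kernel_is_line[OF assms(2-4) xy(2) Q.subspace_neg[OF subspace_VID xy(3)]
        Q.subspace_neg[OF subspace_WV xy(4)]] by blast
  then have "z = qscale (- r) (kernel_V w1 w2)"
    by (simp add: qscale_def)
  then show "z \<in> Q.span {kernel_V w1 w2}"
    using Q.span_scale[OF Q.span_base[OF singletonI]] by metis
next
  have "v = - h + d" if "h - d + v = 0" for h d v :: "rat poly poly"
    using that by algebra
  then have "kernel_V w1 w2 = - kernel_H w1 + kernel_D w1 w2"
    using kernel_gens_relation by blast
  then have "kernel_V w1 w2 \<in> {x + y |x y. x \<in> WH w1 \<and> y \<in> VID w1 w2}"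
    using Q.subspace_neg[OF subspace_WH kernel_gens_mem(1)[OF assms(1,2)]]
      kernel_gens_mem(2)[OF assms(1,2)] by blast
  then have "{kernel_V w1 w2} \<subseteq> {x + y |x y. x \<in> WH w1 \<and> y \<in> VID w1 w2} \<inter> WV w1 w2"
    using kernel_gens_mem(3)[OF assms(1,2)] by blast
  then show "Q.span {kernel_V w1 w2} \<subseteq> {x + y |x y. x \<in> WH w1 \<and> y \<in> VID w1 w2} \<inter> WV w1 w2"
    by (rule Q.span_minimal[OF _ Q.subspace_inter[OF Q.subspace_sums[OF subspace_WH subspace_VID]
          subspace_WV]])
qed

lemma dim_Ew:
  assumes "even w1" "even w2" "w1 \<ge> 1" "w2 \<ge> 1"
  shows "Q.dim (Ew w1 w2) + 1 = P.dim (Ww w1) + Q.dim (VID w1 w2) + P.dim (Ww w2)"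
proof -
  define HD where "HD = {x + y |x y. x \<in> WH w1 \<and> y \<in> VID w1 w2}"
  define F :: "rat poly poly set" where "F = (\<lambda>(i, j). monom (monom 1 i) j) ` ({..w1} \<times> {..w2})"
  have F: "finite F" "V2 w1 w2 \<subseteq> Q.span F"
    unfolding F_def using V2_subset_span_monoms by simp_all
  have HD: "Q.subspace HD"
    unfolding HD_def by (rule Q.subspace_sums[OF subspace_WH subspace_VID])
  have "HD \<subseteq> V2 w1 w2"
    unfolding HD_def using WH_subset_V2[of w1 w2] VID_subset_V2[of w1 w2]
      Q.subspace_add[OF subspace_V2] by blast
  then have HD_F: "HD \<subseteq> Q.span F"
    using F(2) by blast
  have "Ew w1 w2 = {x + y |x y. x \<in> HD \<and> y \<in> WV w1 w2}"
  proof (intro equalityI subsetI)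
    fix z assume "z \<in> Ew w1 w2"
    then obtain a b c where "z = (a + b) + c" "a \<in> WH w1" "b \<in> VID w1 w2" "c \<in> WV w1 w2"
      unfolding Ew_def by blast
    moreover from this have "a + b \<in> HD"
      unfolding HD_def by blast
    ultimately show "z \<in> {x + y |x y. x \<in> HD \<and> y \<in> WV w1 w2}"
      by blast
  next
    fix z assume "z \<in> {x + y |x y. x \<in> HD \<and> y \<in> WV w1 w2}"
    then obtain a b c where "z = a + b + c" "a \<in> WH w1" "b \<in> VID w1 w2" "c \<in> WV w1 w2"
      unfolding HD_def by blast
    then show "z \<in> Ew w1 w2"
      unfolding Ew_def by blast
  qed
  moreover have WV_F: "WV w1 w2 \<subseteq> Q.span F"
    using WV_subset_V2[of w1 w2] F(2) by (rule order_trans)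
  ultimately have "Q.dim (Ew w1 w2) + 1 = Q.dim HD + Q.dim (WV w1 w2)"
    using Q.dim_sums_line_Int[OF HD subspace_WV sums_WH_VID_Int_WV[OF assms, folded HD_def]
        kernel_V_nonzero[OF assms(4)] F(1) HD_F WV_F]
    by simp
  also have "Q.dim HD = Q.dim (WH w1) + Q.dim (VID w1 w2)"
    unfolding HD_def
    using WH_subset_V2[of w1 w2] VID_subset_V2[of w1 w2] F(2)
    by (intro Q.dim_sums_direct[OF subspace_WH subspace_VID WH_Int_VID[OF assms(2-4)] F(1)]) auto
  also have "Q.dim (WH w1) = P.dim (Ww w1)"
    unfolding WH_eq_image by (rule PQ.dim_image_inj[OF module_hom_pCons]) (auto intro: injI)
  also have "Q.dim (WV w1 w2) = P.dim (Ww w2)"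
    unfolding WV_eq_image by (rule PQ.dim_image_inj[OF module_hom_tensor inj_tensor]) simp
  finally show ?thesis .
qed

theorem proposition19:
  fixes w1 w2 :: nat
  assumes "even w1" and "even w2" and "w1 \<ge> 2" and "w2 \<ge> 2"
  shows "(\<lambda>(PH, PD, PV). PH - PD + PV) ` (WH w1 \<times> VID w1 w2 \<times> WV w1 w2) = Ew w1 w2
    \<and> {(PH, PD, PV). PH \<in> WH w1 \<and> PD \<in> VID w1 w2 \<and> PV \<in> WV w1 w2 \<and> PH - PD + PV = 0}
       = {(qscale r [:1 - monom 1 w1:],
           qscale r (1 - monom (monom 1 w1) w2),
           qscale r ([:monom 1 w1:] * (1 - monom 1 w2))) | r. True}
    \<and> int (vector_space.dim qscale (Ew w1 w2))
       = int (vector_space.dim (smult :: rat \<Rightarrow> rat poly \<Rightarrow> rat poly) (Ww w1))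
         + int (vector_space.dim qscale (VID w1 w2))
         + int (vector_space.dim (smult :: rat \<Rightarrow> rat poly \<Rightarrow> rat poly) (Ww w2)) - 1"
proof -
  have w: "w1 \<ge> 1" "w2 \<ge> 1"
    using assms by auto
  show ?thesis
    using image_eq_Ew kernel_eq_line[OF assms(1,2) w] dim_Ew[OF assms(1,2) w] by simp
qed

end
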